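(* Let $n\ge5$ and consider generic twisted $n$-gons modulo projective equivalence with corner invariants $(x_1,y_1,\dots,x_n,y_n)$. The functions $O_n=\prod_{i=1}^n x_i$ and $E_n=\prod_{i=1}^n y_i$ are invariant under the pentagram map. When $n$ is even, the functions $O_{n/2}=\prod_{i\text{ even}}x_i+\prod_{i\text{ odd}}x_i$ and $E_{n/2}=\prod_{i\text{ even}}y_i+\prod_{i\text{ odd}}y_i$ (products over $1\le i\le n$) are also invariant under the pentagram map.
   Context: A twisted $n$-gon is a map $\phi:\mathbb{Z}\to\mathbb{RP}^2$ with $\phi(k+n)=M\circ\phi(k)$ for all $k$, for a fixed $M\in\mathrm{PGL}(3,\mathbb{R})$, such that $v_{i-1},v_i,v_{i+1}$ are in general position for all $i$, where $v_i=\phi(i)$. The cross ratio of four collinear points is $[t_1,t_2,t_3,t_4]=\frac{(t_1-t_2)(t_3-t_4)}{(t_1-t_3)(t_2-t_4)}$ in an affine parameter $t$ on the line. Writing $(p,q)$ for the line through $p,q$, the corner invariants are $x_i=[v_{i-2},v_{i-1},(v_{i-2},v_{i-1})\cap(v_i,v_{i+1}),(v_{i-2},v_{i-1})\cap(v_{i+1},v_{i+2})]$ and $y_i=[(v_{i-2},v_{i-1})\cap(v_{i+1},v_{i+2}),(v_{i-1},v_i)\cap(v_{i+1},v_{i+2}),v_{i+1},v_{i+2}]$; they are $n$-periodic and projectively invariant, giving coordinates on the space of generic twisted $n$-gons modulo projective equivalence. The pentagram map $T$ sends $\phi$ to the twisted $n$-gon whose vertices are the intersection points $(v_i,v_{i+2})\cap(v_{i+1},v_{i+3})$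 of consecutive shortest diagonals, with a fixed labelling convention (index shift). *)

theory Defs
  imports "HOL-Analysis.Analysis"
begin

text \<open>Points of RP^2 are represented by homogeneous coordinates: nonzero vectors in
  real^3, two vectors representing the same point iff they are proportional.
  The line through p, q has coordinates cross3 p q; the intersection point of the
  lines (p,q) and (r,s) is cross3 (cross3 p q) (cross3 r s).\<close>

definition proj_eq :: "real^3 \<Rightarrow> real^3 \<Rightarrow> bool" where
  "proj_eq p q \<longleftrightarrow> p \<noteq> 0 \<and> q \<noteq> 0 \<and> (\<exists>c. c \<noteq> 0 \<and> p = c *\<^sub>R q)"

definition line_meet :: "real^3 \<Rightarrow> real^3 \<Rightarrow> real^3 \<Rightarrow> real^3 \<Rightarrow> real^3" where
  "line_meet p q r s = cross3 (cross3 p q) (cross3 r s)"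

definition gen_pos :: "real^3 \<Rightarrow> real^3 \<Rightarrow> real^3 \<Rightarrow> bool" where
  "gen_pos a b c \<longleftrightarrow> a \<bullet> cross3 b c \<noteq> 0"

text \<open>Cross ratio of four collinear points, computed in an affine parameter t on the
  line: the line is parametrised by t \<mapsto> [A + t B] with A, B linearly independent,
  and the point p_k is [A + t_k B].  The value does not depend on the parametrisation.\<close>
definition cross_ratio :: "real^3 \<Rightarrow> real^3 \<Rightarrow> real^3 \<Rightarrow> real^3 \<Rightarrow> real" where
  "cross_ratio p1 p2 p3 p4 = (THE c. \<forall>A B t1 t2 t3 t4.
      (\<not> (\<exists>u. A = u *\<^sub>R B)) \<and> B \<noteq> 0 \<and>
      proj_eq p1 (A + t1 *\<^sub>R B) \<and> proj_eq p2 (A + t2 *\<^sub>R B) \<and>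
      proj_eq p3 (A + t3 *\<^sub>R B) \<and> proj_eq p4 (A + t4 *\<^sub>R B)
      \<longrightarrow> c = ((t1 - t2) * (t3 - t4)) / ((t1 - t3) * (t2 - t4)))"

text \<open>A twisted n-gon, given by a lift phi : int \<Rightarrow> real^3 of its vertices
  v_k = [phi k], with monodromy M in PGL(3,R) (represented by an invertible matrix).\<close>
definition twisted_ngon :: "nat \<Rightarrow> (int \<Rightarrow> real^3) \<Rightarrow> bool" where
  "twisted_ngon n phi \<longleftrightarrow>
     (\<forall>k. phi k \<noteq> 0) \<and>
     (\<exists>M :: real^3^3. invertible M \<and> (\<forall>k. proj_eq (phi (k + int n)) (M *v phi k))) \<and>
     (\<forall>i. gen_pos (phi (i - 1)) (phi i) (phi (i + 1)))"

definition corner_x :: "(int \<Rightarrow> real^3) \<Rightarrow> int \<Rightarrow> real" where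
  "corner_x v i = cross_ratio (v (i - 2)) (v (i - 1))
      (line_meet (v (i - 2)) (v (i - 1)) (v i) (v (i + 1)))
      (line_meet (v (i - 2)) (v (i - 1)) (v (i + 1)) (v (i + 2)))"

definition corner_y :: "(int \<Rightarrow> real^3) \<Rightarrow> int \<Rightarrow> real" where
  "corner_y v i = cross_ratio
      (line_meet (v (i - 2)) (v (i - 1)) (v (i + 1)) (v (i + 2)))
      (line_meet (v (i - 1)) (v i) (v (i + 1)) (v (i + 2)))
      (v (i + 1)) (v (i + 2))"

definition distinct_pt :: "real^3 \<Rightarrow> real^3 \<Rightarrow> bool" where
  "distinct_pt p q \<longleftrightarrow> p \<noteq> 0 \<and> q \<noteq> 0 \<and> \<not> proj_eq p q"

definition distinct4 :: "real^3 \<Rightarrow> real^3 \<Rightarrow> real^3 \<Rightarrow> real^3 \<Rightarrow> bool" where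
  "distinct4 a b c d \<longleftrightarrow> distinct_pt a b \<and> distinct_pt a c \<and> distinct_pt a d \<and>
     distinct_pt b c \<and> distinct_pt b d \<and> distinct_pt c d"

text \<open>Genericity: all points entering the corner invariants are well defined and the
  four points of each cross ratio are pairwise distinct, so the corner invariants
  are finite and well defined.\<close>
definition generic_twisted_ngon :: "nat \<Rightarrow> (int \<Rightarrow> real^3) \<Rightarrow> bool" where
  "generic_twisted_ngon n v \<longleftrightarrow> twisted_ngon n v \<and>
     (\<forall>i. distinct4 (v (i - 2)) (v (i - 1))
            (line_meet (v (i - 2)) (v (i - 1)) (v i) (v (i + 1)))
            (line_meet (v (i - 2)) (v (i - 1)) (v (i + 1)) (v (i + 2)))) \<and>
     (\<forall>i. distinct4 (line_meet (v (i - 2)) (v (i - 1)) (v (i + 1)) (v (i + 2)))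
            (line_meet (v (i - 1)) (v i) (v (i + 1)) (v (i + 2)))
            (v (i + 1)) (v (i + 2)))"

text \<open>The pentagram map, with the labelling convention
  T(v)_k = (v_k, v_{k+2}) \<inter> (v_{k+1}, v_{k+3}).\<close>
definition pentagram :: "(int \<Rightarrow> real^3) \<Rightarrow> int \<Rightarrow> real^3" where
  "pentagram v k = line_meet (v k) (v (k + 2)) (v (k + 1)) (v (k + 3))"

end

theory Submission
  imports Defs
begin

text \<open>Lift the polygon to vectors v_i in R^3 and write [a b c] for det(v_a, v_b, v_c).
  Each corner invariant is a ratio of four brackets, and since the vertex T(v)_k is the meet of
  the diagonals v_k v_(k+2) and v_(k+1) v_(k+3), every bracket of T(v) is a product of four
  brackets of v. This yields
    x_i(T v) = x_(i+1)(v) h_i / h_(i+2)   and   y_i(T v) = y_(i+2)(v) h_(i+3) / h_(i+1)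
  for an explicit ratio of brackets h (pentagram_gauge). The monodromy rescales each bracket by factors that
  cancel in all these ratios, so x, y and h are n-periodic. Over a full period, or over one
  parity class when n is even, the factors h telescope away; the index shift by one in the
  formula for x swaps the two parity classes, which is why only the sum of the even and the
  odd product of the x_i is invariant.\<close>

section \<open>Cross ratios in coordinates\<close>

lemma cross3_scaleR_add:
  "cross3 (a *\<^sub>R P + b *\<^sub>R Q) (c *\<^sub>R P + d *\<^sub>R Q) = (a * d - c * b) *\<^sub>R cross3 P Q"
  by (simp add: cross3_simps forall_3)

lemma independent_lincomb_eq_0:
  assumes "cross3 P Q \<noteq> 0" "a *\<^sub>R P + b *\<^sub>R Q = 0"
  shows "a = 0 \<and> b = 0"
  using assms cross3_scaleR_add[of a P b Q 0 1] cross3_scaleR_add[of 1 P 0 Q a b] by auto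

lemma cross3_nonzero_if_distinct_pt:
  assumes "distinct_pt p q"
  shows "cross3 p q \<noteq> 0"
proof
  assume "cross3 p q = 0"
  then have "collinear {0, p, q}" by (simp add: cross_eq_0)
  moreover have "p \<noteq> 0" "q \<noteq> 0" "\<not> proj_eq p q"
    using assms by (auto simp: distinct_pt_def)
  ultimately obtain c where c: "q = c *\<^sub>R p" "c \<noteq> 0"
    by (auto simp: collinear_lemma)
  then have "p = (1 / c) *\<^sub>R q" by simp
  with c \<open>p \<noteq> 0\<close> \<open>q \<noteq> 0\<close> have "proj_eq p q"
    unfolding proj_eq_def by (intro conjI exI[of _ "1 / c"]) auto
  with \<open>\<not> proj_eq p q\<close> show False ..
qed

lemma cross_ratio_param_eq_det_ratio:
  fixes P Q A B :: "real^3"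
  assumes N: "cross3 P Q \<noteq> 0"
    and p1: "proj_eq (a1 *\<^sub>R P + b1 *\<^sub>R Q) (A + t1 *\<^sub>R B)"
    and p2: "proj_eq (a2 *\<^sub>R P + b2 *\<^sub>R Q) (A + t2 *\<^sub>R B)"
    and p3: "proj_eq (a3 *\<^sub>R P + b3 *\<^sub>R Q) (A + t3 *\<^sub>R B)"
    and p4: "proj_eq (a4 *\<^sub>R P + b4 *\<^sub>R Q) (A + t4 *\<^sub>R B)"
    and D13: "a1 * b3 - a3 * b1 \<noteq> 0" and D24: "a2 * b4 - a4 * b2 \<noteq> 0"
  shows "((a1 * b2 - a2 * b1) * (a3 * b4 - a4 * b3)) / ((a1 * b3 - a3 * b1) * (a2 * b4 - a4 * b2))
         = ((t1 - t2) * (t3 - t4)) / ((t1 - t3) * (t2 - t4))"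
proof -
  define l where "l = (cross3 A B \<bullet> cross3 P Q) / (cross3 P Q \<bullet> cross3 P Q)"
  have det: "a * b' - a' * b = c * c' * (t' - t) * l"
    if "a *\<^sub>R P + b *\<^sub>R Q = c *\<^sub>R (A + t *\<^sub>R B)" "a' *\<^sub>R P + b' *\<^sub>R Q = c' *\<^sub>R (A + t' *\<^sub>R B)"
    for a b c t a' b' c' t'
  proof -
    have "(a * b' - a' * b) *\<^sub>R cross3 P Q = (c * c' * (t' - t)) *\<^sub>R cross3 A B"
      using that cross3_scaleR_add[of a P b Q a' b'] cross3_scaleR_add[of c A "c * t" B c' "c' * t'"]
      by (simp add: scaleR_add_right algebra_simps)
    then have "(a * b' - a' * b) * (cross3 P Q \<bullet> cross3 P Q)
        = c * c' * (t' - t) * (cross3 A B \<bullet> cross3 P Q)"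
      by (metis inner_scaleR_left)
    then show ?thesis using N by (simp add: l_def field_simps)
  qed
  obtain c1 c2 c3 c4 where c: "c1 \<noteq> 0" "c2 \<noteq> 0" "c3 \<noteq> 0" "c4 \<noteq> 0"
    and e: "a1 *\<^sub>R P + b1 *\<^sub>R Q = c1 *\<^sub>R (A + t1 *\<^sub>R B)" "a2 *\<^sub>R P + b2 *\<^sub>R Q = c2 *\<^sub>R (A + t2 *\<^sub>R B)"
      "a3 *\<^sub>R P + b3 *\<^sub>R Q = c3 *\<^sub>R (A + t3 *\<^sub>R B)" "a4 *\<^sub>R P + b4 *\<^sub>R Q = c4 *\<^sub>R (A + t4 *\<^sub>R B)"
    using p1 p2 p3 p4 unfolding proj_eq_def by metis
  note dets = det[OF e(1) e(2)] det[OF e(3) e(4)] det[OF e(1) e(3)] det[OF e(2) e(4)]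
  define K where "K = c1 * c2 * c3 * c4 * l * l"
  have "l \<noteq> 0" using D13 dets by auto
  with c have "K \<noteq> 0" by (simp add: K_def)
  moreover have "(c1 * c2 * (t2 - t1) * l) * (c3 * c4 * (t4 - t3) * l) = K * ((t1 - t2) * (t3 - t4))"
    "(c1 * c3 * (t3 - t1) * l) * (c2 * c4 * (t4 - t2) * l) = K * ((t1 - t3) * (t2 - t4))"
    by (simp_all add: K_def algebra_simps)
  ultimately show ?thesis
    unfolding dets by simp
qed

lemma line_affine_chart:
  fixes P Q :: "real^3"
  assumes N: "cross3 P Q \<noteq> 0" and S: "finite S" "(0, 0) \<notin> S"
  obtains A B t where "\<not> (\<exists>u. A = u *\<^sub>R B)" "B \<noteq> 0"
    "\<And>a b. (a, b) \<in> S \<Longrightarrow> proj_eq (a *\<^sub>R P + b *\<^sub>R Q) (A + t a b *\<^sub>R B)"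
proof -
  \<comment> \<open>no point of S is at infinity in the chart t \<mapsto> [Q + t (P + s Q)]\<close>
  obtain s :: real where s: "s \<notin> (\<lambda>(a, b). b / a) ` S"
    using ex_new_if_finite[OF infinite_UNIV_char_0] S by blast
  define B where "B = P + s *\<^sub>R Q"
  have "cross3 B Q = cross3 P Q"
    unfolding B_def using cross3_scaleR_add[of 1 P s Q 0 1] by simp
  then have indep: "\<not> (\<exists>u. Q = u *\<^sub>R B)" "B \<noteq> 0"
    using N by (auto simp: cross_mult_right)
  have chart: "proj_eq (a *\<^sub>R P + b *\<^sub>R Q) (Q + (a / (b - s * a)) *\<^sub>R B)" if ab: "(a, b) \<in> S" for a b
  proof -
    have nz: "a *\<^sub>R P + b *\<^sub>R Q \<noteq> 0"
      using independent_lincomb_eq_0[OF N, of a b] ab S(2) by auto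
    have "b - s * a \<noteq> 0"
    proof (cases "a = 0")
      case True
      with nz show ?thesis by auto
    next
      case False
      have "s \<noteq> b / a" using s ab by force
      with False show ?thesis by (auto simp: field_simps)
    qed
    then have "(b - s * a) *\<^sub>R (Q + (a / (b - s * a)) *\<^sub>R B) = (b - s * a) *\<^sub>R Q + a *\<^sub>R B"
      by (simp add: scaleR_add_right)
    also have "\<dots> = a *\<^sub>R P + b *\<^sub>R Q"
      by (simp add: B_def scaleR_add_right algebra_simps)
    finally have "a *\<^sub>R P + b *\<^sub>R Q = (b - s * a) *\<^sub>R (Q + (a / (b - s * a)) *\<^sub>R B)" ..
    with nz \<open>b - s * a \<noteq> 0\<close> show ?thesis
      unfolding proj_eq_def by (metis scaleR_zero_right)
  qed
  show ?thesis
    by (rule that[of Q B "\<lambda>a b. a / (b - s * a)"]) (use indep chart in auto)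
qed

lemma cross_ratio_coordinates:
  fixes P Q p1 p2 p3 p4 :: "real^3"
  assumes N: "cross3 P Q \<noteq> 0"
    and p1: "p1 = a1 *\<^sub>R P + b1 *\<^sub>R Q" and p2: "p2 = a2 *\<^sub>R P + b2 *\<^sub>R Q"
    and p3: "p3 = a3 *\<^sub>R P + b3 *\<^sub>R Q" and p4: "p4 = a4 *\<^sub>R P + b4 *\<^sub>R Q"
    and d: "distinct4 p1 p2 p3 p4"
  shows "cross_ratio p1 p2 p3 p4
    = ((a1 * b2 - a2 * b1) * (a3 * b4 - a4 * b3)) / ((a1 * b3 - a3 * b1) * (a2 * b4 - a4 * b2))"
    (is "_ = ?r")
proof -
  have "cross3 p1 p3 \<noteq> 0" "cross3 p2 p4 \<noteq> 0"
    using d cross3_nonzero_if_distinct_pt by (auto simp: distinct4_def)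
  then have D: "a1 * b3 - a3 * b1 \<noteq> 0" "a2 * b4 - a4 * b2 \<noteq> 0"
    by (auto simp: p1 p2 p3 p4 cross3_scaleR_add)
  note param = cross_ratio_param_eq_det_ratio[OF N _ _ _ _ D]
  have "p1 \<noteq> 0" "p2 \<noteq> 0" "p3 \<noteq> 0" "p4 \<noteq> 0"
    using d by (auto simp: distinct4_def distinct_pt_def)
  then have nz: "(0, 0) \<notin> {(a1, b1), (a2, b2), (a3, b3), (a4, b4)}"
    by (auto simp: p1 p2 p3 p4)
  have "finite {(a1, b1), (a2, b2), (a3, b3), (a4, b4)}" by simp
  obtain A B t where AB: "\<not> (\<exists>u. A = u *\<^sub>R B)" "B \<noteq> 0"
    and t: "\<And>a b. (a, b) \<in> {(a1, b1), (a2, b2), (a3, b3), (a4, b4)}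
      \<Longrightarrow> proj_eq (a *\<^sub>R P + b *\<^sub>R Q) (A + t a b *\<^sub>R B)"
    using line_affine_chart[OF N \<open>finite _\<close> nz] by metis
  show ?thesis
    unfolding cross_ratio_def
  proof (rule the_equality)
    show "\<forall>A B t1 t2 t3 t4. \<not> (\<exists>u. A = u *\<^sub>R B) \<and> B \<noteq> 0 \<and>
      proj_eq p1 (A + t1 *\<^sub>R B) \<and> proj_eq p2 (A + t2 *\<^sub>R B) \<and>
      proj_eq p3 (A + t3 *\<^sub>R B) \<and> proj_eq p4 (A + t4 *\<^sub>R B) \<longrightarrow>
      ?r = (t1 - t2) * (t3 - t4) / ((t1 - t3) * (t2 - t4))"
      unfolding p1 p2 p3 p4 using param by (intro allI impI) (elim conjE)
  next
    fix c
    assume "\<forall>A B t1 t2 t3 t4. \<not> (\<exists>u. A = u *\<^sub>R B) \<and> B \<noteq> 0 \<and>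
      proj_eq p1 (A + t1 *\<^sub>R B) \<and> proj_eq p2 (A + t2 *\<^sub>R B) \<and>
      proj_eq p3 (A + t3 *\<^sub>R B) \<and> proj_eq p4 (A + t4 *\<^sub>R B) \<longrightarrow>
      c = (t1 - t2) * (t3 - t4) / ((t1 - t3) * (t2 - t4))"
    note c_eq = this[rule_format, of A B "t a1 b1" "t a2 b2" "t a3 b3" "t a4 b4"]
    have pts: "proj_eq p1 (A + t a1 b1 *\<^sub>R B)" "proj_eq p2 (A + t a2 b2 *\<^sub>R B)"
      "proj_eq p3 (A + t a3 b3 *\<^sub>R B)" "proj_eq p4 (A + t a4 b4 *\<^sub>R B)"
      unfolding p1 p2 p3 p4 by (rule t; simp)+
    have "c = (t a1 b1 - t a2 b2) * (t a3 b3 - t a4 b4)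
        / ((t a1 b1 - t a3 b3) * (t a2 b2 - t a4 b4))"
      by (rule c_eq) (intro conjI AB pts)
    also have "\<dots> = ?r"
      by (rule param[symmetric]) (rule t; simp)+
    finally show "c = ?r" .
  qed
qed

section \<open>Corner invariants as ratios of brackets\<close>

lemma line_meet_on_first_line:
  "line_meet a b c d = (a \<bullet> cross3 c d) *\<^sub>R b - (b \<bullet> cross3 c d) *\<^sub>R a"
  by (simp add: line_meet_def cross3_simps forall_3)

lemma line_meet_on_second_line:
  "line_meet a b c d = (a \<bullet> cross3 b d) *\<^sub>R c - (a \<bullet> cross3 b c) *\<^sub>R d"
  by (simp add: line_meet_def cross3_simps forall_3)

lemma cross_ratio_corner_x:
  assumes "cross3 a b \<noteq> 0" "distinct4 a b (line_meet a b c d) (line_meet a b d e)"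
  shows "cross_ratio a b (line_meet a b c d) (line_meet a b d e)
    = (a \<bullet> cross3 b d) * (c \<bullet> cross3 d e) / ((a \<bullet> cross3 c d) * (b \<bullet> cross3 d e))"
proof -
  have "cross_ratio a b (line_meet a b c d) (line_meet a b d e)
    = ((b \<bullet> cross3 d e) * (a \<bullet> cross3 c d) - (b \<bullet> cross3 c d) * (a \<bullet> cross3 d e))
      / ((a \<bullet> cross3 c d) * (b \<bullet> cross3 d e))"
    by (subst cross_ratio_coordinates[OF assms(1) _ _ _ _ assms(2), of 1 0 0 1
          "- (b \<bullet> cross3 c d)" "a \<bullet> cross3 c d" "- (b \<bullet> cross3 d e)" "a \<bullet> cross3 d e"])
      (simp_all add: line_meet_on_first_line algebra_simps)
  also have "(b \<bullet> cross3 d e) * (a \<bullet> cross3 c d) - (b \<bullet> cross3 c d) * (a \<bullet> cross3 d e)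
    = (a \<bullet> cross3 b d) * (c \<bullet> cross3 d e)"
    by (simp add: cross3_simps)
  finally show ?thesis .
qed

lemma cross_ratio_corner_y:
  assumes "cross3 d e \<noteq> 0" "distinct4 (line_meet a b d e) (line_meet b c d e) d e"
  shows "cross_ratio (line_meet a b d e) (line_meet b c d e) d e
    = (a \<bullet> cross3 b c) * (b \<bullet> cross3 d e) / ((a \<bullet> cross3 b d) * (b \<bullet> cross3 c e))"
proof -
  have "cross_ratio (line_meet a b d e) (line_meet b c d e) d e
    = ((b \<bullet> cross3 c e) * (a \<bullet> cross3 b d) - (a \<bullet> cross3 b e) * (b \<bullet> cross3 c d))
      / ((a \<bullet> cross3 b d) * (b \<bullet> cross3 c e))"
    by (subst cross_ratio_coordinates[OF assms(1) _ _ _ _ assms(2),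
          of "a \<bullet> cross3 b e" "- (a \<bullet> cross3 b d)" "b \<bullet> cross3 c e" "- (b \<bullet> cross3 c d)" 1 0 0 1])
      (simp_all add: line_meet_on_second_line algebra_simps)
  also have "(b \<bullet> cross3 c e) * (a \<bullet> cross3 b d) - (a \<bullet> cross3 b e) * (b \<bullet> cross3 c d)
    = (a \<bullet> cross3 b c) * (b \<bullet> cross3 d e)"
    by (simp add: cross3_simps)
  finally show ?thesis .
qed

lemma distinct_pt_line_meet_first:
  assumes "distinct_pt a (line_meet a b c d)"
  shows "a \<bullet> cross3 c d \<noteq> 0"
proof
  assume "a \<bullet> cross3 c d = 0"
  then have "cross3 a (line_meet a b c d) = 0"
    by (simp add: line_meet_on_first_line cross_mult_right Cross3.right_diff_distrib)
  with assms show False using cross3_nonzero_if_distinct_pt by blast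
qed

lemma distinct_pt_line_meet_last:
  assumes "distinct_pt (line_meet a b c d) d"
  shows "a \<bullet> cross3 b d \<noteq> 0"
proof
  assume "a \<bullet> cross3 b d = 0"
  then have "cross3 (line_meet a b c d) d = 0"
    by (simp add: line_meet_on_second_line cross_mult_left Cross3.left_diff_distrib)
  with assms show False using cross3_nonzero_if_distinct_pt by blast
qed

definition bracket :: "(int \<Rightarrow> real^3) \<Rightarrow> int \<Rightarrow> int \<Rightarrow> int \<Rightarrow> real" where
  "bracket u a b c = u a \<bullet> cross3 (u b) (u c)"

lemma inner_cross3_rotate: "a \<bullet> cross3 b c = b \<bullet> cross3 c a"
  by (simp add: cross3_simps)

lemma gen_pos_cross3_nonzero:
  assumes "gen_pos a b c"
  shows "cross3 a b \<noteq> 0" "cross3 b c \<noteq> 0"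
  using assms inner_cross3_rotate[of c a b] by (auto simp: gen_pos_def)

lemma generic_twisted_ngon_gen_pos:
  "generic_twisted_ngon n u \<Longrightarrow> gen_pos (u (i - 1)) (u i) (u (i + 1))"
  by (simp add: generic_twisted_ngon_def twisted_ngon_def)

definition corner_x_det :: "(int \<Rightarrow> real^3) \<Rightarrow> int \<Rightarrow> real" where
  "corner_x_det u i = bracket u (i - 2) (i - 1) (i + 1) * bracket u i (i + 1) (i + 2)
    / (bracket u (i - 2) i (i + 1) * bracket u (i - 1) (i + 1) (i + 2))"

definition corner_y_det :: "(int \<Rightarrow> real^3) \<Rightarrow> int \<Rightarrow> real" where
  "corner_y_det u i = bracket u (i - 2) (i - 1) i * bracket u (i - 1) (i + 1) (i + 2)
    / (bracket u (i - 2) (i - 1) (i + 1) * bracket u (i - 1) i (i + 2))"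

lemma corner_x_eq_det:
  assumes "generic_twisted_ngon n u"
  shows "corner_x u i = corner_x_det u i"
proof -
  have "cross3 (u (i - 2)) (u (i - 1)) \<noteq> 0"
    using gen_pos_cross3_nonzero(1) generic_twisted_ngon_gen_pos[OF assms, of "i - 1"] by simp
  moreover have "distinct4 (u (i - 2)) (u (i - 1)) (line_meet (u (i - 2)) (u (i - 1)) (u i) (u (i + 1)))
      (line_meet (u (i - 2)) (u (i - 1)) (u (i + 1)) (u (i + 2)))"
    using assms by (simp add: generic_twisted_ngon_def)
  ultimately show ?thesis
    by (simp add: corner_x_def corner_x_det_def bracket_def cross_ratio_corner_x)
qed

lemma corner_y_eq_det:
  assumes "generic_twisted_ngon n u"
  shows "corner_y u i = corner_y_det u i"
proof -
  have "cross3 (u (i + 1)) (u (i + 2)) \<noteq> 0"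
    using gen_pos_cross3_nonzero(2) generic_twisted_ngon_gen_pos[OF assms, of "i + 1"]
    by (simp add: add.assoc)
  moreover have "distinct4 (line_meet (u (i - 2)) (u (i - 1)) (u (i + 1)) (u (i + 2)))
      (line_meet (u (i - 1)) (u i) (u (i + 1)) (u (i + 2))) (u (i + 1)) (u (i + 2))"
    using assms by (simp add: generic_twisted_ngon_def)
  ultimately show ?thesis
    by (simp add: corner_y_def corner_y_det_def bracket_def cross_ratio_corner_y)
qed

lemma generic_bracket_nonzero:
  assumes "generic_twisted_ngon n u"
  shows "bracket u j (j + 1) (j + 2) \<noteq> 0"
    and "bracket u j (j + 2) (j + 3) \<noteq> 0"
    and "bracket u j (j + 1) (j + 3) \<noteq> 0"
proof -
  show "bracket u j (j + 1) (j + 2) \<noteq> 0"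
    using generic_twisted_ngon_gen_pos[OF assms, of "j + 1"] by (simp add: gen_pos_def bracket_def add.assoc)
  have "u (i - 2) \<bullet> cross3 (u i) (u (i + 1)) \<noteq> 0"
    and "u (i - 1) \<bullet> cross3 (u i) (u (i + 2)) \<noteq> 0" for i
    using assms distinct_pt_line_meet_first distinct_pt_line_meet_last
    unfolding generic_twisted_ngon_def distinct4_def by blast+
  from this(1)[of "j + 2"] this(2)[of "j + 1"]
  show "bracket u j (j + 2) (j + 3) \<noteq> 0" "bracket u j (j + 1) (j + 3) \<noteq> 0"
    by (simp_all add: bracket_def algebra_simps)
qed

section \<open>Brackets of the pentagram image\<close>

lemma inner_cross3_cross3_shared:
  "cross3 x y \<bullet> cross3 (cross3 y z) (cross3 p q) = (x \<bullet> cross3 y z) * (p \<bullet> cross3 q y)"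
  by (simp add: cross3_simps)

lemma inner_cross3_cross3_interlaced:
  "cross3 a c \<bullet> cross3 (cross3 b d) (cross3 c e) = (a \<bullet> cross3 c e) * (b \<bullet> cross3 c d)"
  by (simp add: cross3_simps)

lemma bracket_cross3_consecutive:
  fixes w :: "int \<Rightarrow> real^3"
  defines "w' \<equiv> \<lambda>k. cross3 (w k) (w (k + 1))"
  shows "bracket w' j (j + 1) (j + 2) = bracket w j (j + 1) (j + 2) * bracket w (j + 1) (j + 2) (j + 3)"
    and "bracket w' j (j + 1) (j + 3) = bracket w j (j + 1) (j + 2) * bracket w (j + 1) (j + 3) (j + 4)"
    and "bracket w' j (j + 2) (j + 3) = bracket w (j + 2) (j + 3) (j + 4) * bracket w j (j + 1) (j + 3)"
proof -
  have idx: "j + 1 + 1 = j + 2" "j + 2 + 1 = j + 3" "j + 3 + 1 = j + 4" by simp_all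
  show "bracket w' j (j + 1) (j + 2) = bracket w j (j + 1) (j + 2) * bracket w (j + 1) (j + 2) (j + 3)"
    unfolding bracket_def w'_def idx inner_cross3_cross3_shared
    by (simp add: inner_cross3_rotate[of "w (j + 1)"])
  show "bracket w' j (j + 1) (j + 3) = bracket w j (j + 1) (j + 2) * bracket w (j + 1) (j + 3) (j + 4)"
    unfolding bracket_def w'_def idx inner_cross3_cross3_shared
    by (simp add: inner_cross3_rotate[of "w (j + 3)"] inner_cross3_rotate[of "w (j + 4)"])
  show "bracket w' j (j + 2) (j + 3) = bracket w (j + 2) (j + 3) (j + 4) * bracket w j (j + 1) (j + 3)"
    unfolding bracket_def w'_def idx inner_cross3_rotate[of "cross3 (w j) (w (j + 1))"]
      inner_cross3_cross3_shared
    by (simp add: inner_cross3_rotate[of "w (j + 3)"])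
qed

definition diagonal :: "(int \<Rightarrow> real^3) \<Rightarrow> int \<Rightarrow> real^3" where
  "diagonal u k = cross3 (u k) (u (k + 2))"

lemma bracket_diagonal:
  shows "bracket (diagonal u) j (j + 1) (j + 2) = bracket u j (j + 2) (j + 4) * bracket u (j + 1) (j + 2) (j + 3)"
    and "bracket (diagonal u) j (j + 1) (j + 3) = bracket u (j + 1) (j + 3) (j + 5) * bracket u j (j + 2) (j + 3)"
    and "bracket (diagonal u) j (j + 2) (j + 3) = bracket u j (j + 2) (j + 4) * bracket u (j + 2) (j + 3) (j + 5)"
proof -
  have idx: "j + 1 + 2 = j + 3" "j + 2 + 2 = j + 4" "j + 3 + 2 = j + 5" by simp_all
  show "bracket (diagonal u) j (j + 1) (j + 2) = bracket u j (j + 2) (j + 4) * bracket u (j + 1) (j + 2) (j + 3)"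
    unfolding bracket_def diagonal_def idx inner_cross3_cross3_interlaced ..
  show "bracket (diagonal u) j (j + 1) (j + 3) = bracket u (j + 1) (j + 3) (j + 5) * bracket u j (j + 2) (j + 3)"
    unfolding bracket_def diagonal_def idx inner_cross3_rotate[of "cross3 (u j) (u (j + 2))"]
      inner_cross3_cross3_shared
    by (simp add: inner_cross3_rotate[of "u (j + 3)"])
  show "bracket (diagonal u) j (j + 2) (j + 3) = bracket u j (j + 2) (j + 4) * bracket u (j + 2) (j + 3) (j + 5)"
    unfolding bracket_def diagonal_def idx inner_cross3_cross3_shared
    by (simp add: inner_cross3_rotate[of "u (j + 2)"])
qed

lemma pentagram_cross3_diagonal: "pentagram u = (\<lambda>k. cross3 (diagonal u k) (diagonal u (k + 1)))"
  by (simp add: fun_eq_iff pentagram_def line_meet_def diagonal_def add.assoc)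

lemma bracket_pentagram:
  "bracket (pentagram u) j (j + 1) (j + 2)
    = bracket u j (j + 2) (j + 4) * bracket u (j + 1) (j + 2) (j + 3)
      * (bracket u (j + 1) (j + 3) (j + 5) * bracket u (j + 2) (j + 3) (j + 4))"
  "bracket (pentagram u) j (j + 1) (j + 3)
    = bracket u j (j + 2) (j + 4) * bracket u (j + 1) (j + 2) (j + 3)
      * (bracket u (j + 1) (j + 3) (j + 5) * bracket u (j + 3) (j + 4) (j + 6))"
  "bracket (pentagram u) j (j + 2) (j + 3)
    = bracket u (j + 2) (j + 4) (j + 6) * bracket u (j + 3) (j + 4) (j + 5)
      * (bracket u (j + 1) (j + 3) (j + 5) * bracket u j (j + 2) (j + 3))"
  unfolding pentagram_cross3_diagonal bracket_cross3_consecutive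
  using bracket_diagonal[of u j] bracket_diagonal[of u "j + 1"] bracket_diagonal[of u "j + 2"]
  by (simp_all add: algebra_simps)

lemma generic_pentagram_bracket_nonzero:
  assumes "generic_twisted_ngon n (pentagram u)"
  shows "bracket u j (j + 2) (j + 4) \<noteq> 0"
  using generic_bracket_nonzero(1)[OF assms, of j] by (simp add: bracket_pentagram)

definition pentagram_gauge :: "(int \<Rightarrow> real^3) \<Rightarrow> int \<Rightarrow> real" where
  "pentagram_gauge u j = bracket u (j - 2) j (j + 2) * bracket u (j - 1) j (j + 1)
    / (bracket u (j - 2) j (j + 1) * bracket u (j - 1) j (j + 2))"

lemma corner_det_pentagram:
  fixes u :: "int \<Rightarrow> real^3"
  assumes N012: "\<And>j. bracket u j (j + 1) (j + 2) \<noteq> 0"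
    and N013: "\<And>j. bracket u j (j + 1) (j + 3) \<noteq> 0"
    and N023: "\<And>j. bracket u j (j + 2) (j + 3) \<noteq> 0"
    and N024: "\<And>j. bracket u j (j + 2) (j + 4) \<noteq> 0"
  shows "corner_x_det (pentagram u) i = corner_x_det u (i + 1) * pentagram_gauge u i / pentagram_gauge u (i + 2)"
    and "corner_y_det (pentagram u) i = corner_y_det u (i + 2) * pentagram_gauge u (i + 3) / pentagram_gauge u (i + 1)"
proof -
  have "bracket u (i + k) (i + k + 1) (i + k + 2) \<noteq> 0" "bracket u (i + k) (i + k + 1) (i + k + 3) \<noteq> 0"
    "bracket u (i + k) (i + k + 2) (i + k + 3) \<noteq> 0" "bracket u (i + k) (i + k + 2) (i + k + 4) \<noteq> 0" for k
    using N012 N013 N023 N024 by blast+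
  note nz = this[of "-2"] this[of "-1"] this[of 0] this[of 1] this[of 2]
  note T = bracket_pentagram[of u "i - 2"] bracket_pentagram[of u "i - 1"] bracket_pentagram[of u i]
  show "corner_x_det (pentagram u) i = corner_x_det u (i + 1) * pentagram_gauge u i / pentagram_gauge u (i + 2)"
    using nz T by (simp add: corner_x_det_def pentagram_gauge_def algebra_simps field_simps)
  show "corner_y_det (pentagram u) i = corner_y_det u (i + 2) * pentagram_gauge u (i + 3) / pentagram_gauge u (i + 1)"
    using nz T by (simp add: corner_y_det_def pentagram_gauge_def algebra_simps field_simps)
qed

lemma generic_pentagram_gauge_nonzero:
  assumes "generic_twisted_ngon n v" and "generic_twisted_ngon n (pentagram v)"
  shows "pentagram_gauge v j \<noteq> 0"
  using generic_pentagram_bracket_nonzero[OF assms(2), of "j - 2"]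
    generic_bracket_nonzero(1)[OF assms(1), of "j - 1"] generic_bracket_nonzero(2)[OF assms(1), of "j - 2"]
    generic_bracket_nonzero(3)[OF assms(1), of "j - 1"]
  by (simp add: pentagram_gauge_def algebra_simps)

lemma corner_pentagram_gauge:
  assumes "generic_twisted_ngon n v" and "generic_twisted_ngon n (pentagram v)"
  shows "corner_x (pentagram v) i = corner_x v (i + 1) * pentagram_gauge v i / pentagram_gauge v (i + 2)"
    and "corner_y (pentagram v) i = corner_y v (i + 2) * pentagram_gauge v (i + 3) / pentagram_gauge v (i + 1)"
  using corner_det_pentagram[OF generic_bracket_nonzero(1,3,2)[OF assms(1)]
      generic_pentagram_bracket_nonzero[OF assms(2)]]
  by (simp_all add: corner_x_eq_det[OF assms(1)] corner_x_eq_det[OF assms(2)]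
      corner_y_eq_det[OF assms(1)] corner_y_eq_det[OF assms(2)])

section \<open>Periodicity and products over a period\<close>

lemma inner_cross3_matrix_mult:
  fixes M :: "real^3^3"
  shows "(M *v x) \<bullet> cross3 (M *v y) (M *v z) = det M * (x \<bullet> cross3 y z)"
  by (simp add: cross3_simps matrix_vector_mult_def sum_3)

lemma twisted_ngon_lift:
  assumes "twisted_ngon n u"
  obtains M s where "det M \<noteq> 0" "\<And>k. s k \<noteq> 0" "\<And>k. u (k + int n) = s k *\<^sub>R (M *v u k)"
proof -
  obtain M :: "real^3^3" where M: "invertible M" "\<And>k. proj_eq (u (k + int n)) (M *v u k)"
    using assms unfolding twisted_ngon_def by blast
  then have "\<forall>k. \<exists>c. c \<noteq> 0 \<and> u (k + int n) = c *\<^sub>R (M *v u k)" by (auto simp: proj_eq_def)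
  then obtain s where "\<And>k. s k \<noteq> 0 \<and> u (k + int n) = s k *\<^sub>R (M *v u k)" by metis
  moreover have "det M \<noteq> 0" using M(1) invertible_det_nz by blast
  ultimately show ?thesis using that[of M s] by blast
qed

lemma bracket_monodromy:
  assumes "\<And>k. u (k + int n) = s k *\<^sub>R (M *v u k)"
  shows "bracket u (a + int n) (b + int n) (c + int n) = (s a * s b * s c * det M) * bracket u a b c"
  by (simp add: bracket_def assms inner_cross3_matrix_mult cross_mult_left cross_mult_right)

lemma corner_det_periodic:
  assumes "twisted_ngon n u"
  shows "corner_x_det u (i + int n) = corner_x_det u i"
    and "corner_y_det u (i + int n) = corner_y_det u i"
    and "pentagram_gauge u (i + int n) = pentagram_gauge u i"
proof -
  obtain M s where M: "det M \<noteq> 0" and s: "\<And>k. s k \<noteq> 0"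
    and lift: "\<And>k. u (k + int n) = s k *\<^sub>R (M *v u k)"
    using twisted_ngon_lift[OF assms] by metis
  have idx: "i + int n - 2 = i - 2 + int n" "i + int n - 1 = i - 1 + int n"
    "i + int n + 1 = i + 1 + int n" "i + int n + 2 = i + 2 + int n" by simp_all
  note B = bracket_monodromy[of u n s M, OF lift]
  have "s (i - 2) \<noteq> 0" "s (i - 1) \<noteq> 0" "s i \<noteq> 0" "s (i + 1) \<noteq> 0" "s (i + 2) \<noteq> 0"
    using s by auto
  with M show "corner_x_det u (i + int n) = corner_x_det u i"
    "corner_y_det u (i + int n) = corner_y_det u i"
    "pentagram_gauge u (i + int n) = pentagram_gauge u i"
    unfolding corner_x_det_def corner_y_det_def pentagram_gauge_def idx B
    by (simp_all add: mult_ac mult_divide_mult_cancel_left_if)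
qed

lemma prod_periodic_shift1:
  fixes f :: "int \<Rightarrow> 'a::comm_monoid_mult"
  assumes per: "\<And>i. f (i + int n) = f i"
  shows "(\<Prod>i\<in>{1..int n}. f (i + 1)) = (\<Prod>i\<in>{1..int n}. f i)"
proof (cases "n = 0")
  case False
  have "(\<Prod>i\<in>{1..int n}. f (i + 1)) = prod f ((\<lambda>i. i + 1) ` {1..int n})"
    by (subst prod.reindex) (auto simp: inj_on_def)
  also have "(\<lambda>i. i + 1) ` {1..int n} = insert (int n + 1) {2..int n}"
    using False by (auto simp: image_iff)
  also have "prod f \<dots> = f 1 * prod f {2..int n}"
    using per[of 1] by (simp add: add.commute)
  also have "\<dots> = prod f (insert 1 {2..int n})" by simp
  also have "insert 1 {2..int n} = {1..int n}" using False by auto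
  finally show ?thesis .
qed simp

lemma prod_periodic_shift:
  fixes f :: "int \<Rightarrow> 'a::comm_monoid_mult"
  assumes per: "\<And>i. f (i + int n) = f i"
  shows "(\<Prod>i\<in>{1..int n}. f (i + int k)) = (\<Prod>i\<in>{1..int n}. f i)"
proof (induction k)
  case (Suc k)
  have "(\<Prod>i\<in>{1..int n}. f (i + int (Suc k))) = (\<Prod>i\<in>{1..int n}. (\<lambda>i. f (i + int k)) (i + 1))"
    by (simp add: add_ac)
  also have "\<dots> = (\<Prod>i\<in>{1..int n}. f (i + int k))"
    by (rule prod_periodic_shift1) (metis per add.assoc add.commute)
  finally show ?case using Suc.IH by simp
qed simp

lemma prod_filter_periodic_shift:
  fixes f :: "int \<Rightarrow> 'a::comm_monoid_mult"
  assumes "\<And>i. f (i + int n) = f i" and "\<And>i. P (i + int n) = P i"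
  shows "(\<Prod>i\<in>{i\<in>{1..int n}. P (i + int k)}. f (i + int k)) = (\<Prod>i\<in>{i\<in>{1..int n}. P i}. f i)"
proof -
  define g where "g i = (if P i then f i else 1)" for i
  have "\<And>i. g (i + int n) = g i" using assms by (simp add: g_def)
  from prod_periodic_shift[of g n, OF this, of k] show ?thesis
    by (simp only: prod.inter_filter[OF finite_atLeastAtMost_int] g_def)
qed

lemma prod_cancel_ratio:
  fixes a b c d :: "'i \<Rightarrow> 'a::field"
  assumes "\<And>i. i \<in> A \<Longrightarrow> a i = b i * c i / d i" and "prod c A = prod d A" and "prod d A \<noteq> 0"
  shows "prod a A = prod b A"
proof (cases "finite A")
  case True
  have "prod a A = prod (\<lambda>i. b i * c i / d i) A" using assms(1) by (rule prod.cong[OF refl])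
  also have "\<dots> = prod b A * prod c A / prod d A" by (simp add: prod.distrib prod_dividef)
  finally show ?thesis using assms(2,3) by simp
qed simp

section \<open>Invariance of the products\<close>

lemma prod_corner_pentagram:
  fixes v :: "int \<Rightarrow> real^3" and P :: "int \<Rightarrow> bool"
  assumes gv: "generic_twisted_ngon n v" and gw: "generic_twisted_ngon n (pentagram v)"
    and Pn: "\<And>i. P (i + int n) = P i" and P2: "\<And>i. P (i + 2) = P i"
  shows "(\<Prod>i\<in>{i\<in>{1..int n}. P i}. corner_x (pentagram v) i) = (\<Prod>i\<in>{i\<in>{1..int n}. P (i + 1)}. corner_x v i)"
    and "(\<Prod>i\<in>{i\<in>{1..int n}. P i}. corner_y (pentagram v) i) = (\<Prod>i\<in>{i\<in>{1..int n}. P i}. corner_y v i)"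
proof -
  let ?A = "{i\<in>{1..int n}. P i}"
  have tw: "twisted_ngon n v" using gv by (simp add: generic_twisted_ngon_def)
  have per: "corner_x v (i + int n) = corner_x v i" "corner_y v (i + int n) = corner_y v i"
    "pentagram_gauge v (i + int n) = pentagram_gauge v i" for i
    using corner_det_periodic[OF tw] by (simp_all add: corner_x_eq_det[OF gv] corner_y_eq_det[OF gv])
  have gauge_shift: "(\<Prod>i\<in>?A. pentagram_gauge v (i + 2 + c)) = (\<Prod>i\<in>?A. pentagram_gauge v (i + c))" for c
  proof -
    have "pentagram_gauge v (i + int n + c) = pentagram_gauge v (i + c)" for i
      using per(3)[of "i + c"] by (simp add: add_ac)
    from prod_filter_periodic_shift[of "\<lambda>i. pentagram_gauge v (i + c)" n P, OF this Pn, of 2] show ?thesis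
      using P2 by (simp add: add_ac)
  qed
  have "finite ?A" by (rule finite_subset[OF _ finite_atLeastAtMost_int]) blast
  then have nz: "(\<Prod>i\<in>?A. pentagram_gauge v (i + c)) \<noteq> 0" for c
    using generic_pentagram_gauge_nonzero[OF gv gw] by simp
  have "(\<Prod>i\<in>?A. corner_x (pentagram v) i) = (\<Prod>i\<in>?A. corner_x v (i + 1))"
  proof (rule prod_cancel_ratio)
    show "corner_x (pentagram v) i = corner_x v (i + 1) * pentagram_gauge v i / pentagram_gauge v (i + 2)" for i
      by (rule corner_pentagram_gauge(1)[OF gv gw])
    show "prod (pentagram_gauge v) ?A = (\<Prod>i\<in>?A. pentagram_gauge v (i + 2))"
      using gauge_shift[of 0] by simp
    show "(\<Prod>i\<in>?A. pentagram_gauge v (i + 2)) \<noteq> 0" by (rule nz)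
  qed
  also have "\<dots> = (\<Prod>i\<in>{i\<in>{1..int n}. P (i + 1)}. corner_x v i)"
  proof -
    have "P (i + int n + 1) = P (i + 1)" for i using Pn[of "i + 1"] by (simp add: add_ac)
    from prod_filter_periodic_shift[of "corner_x v" n "\<lambda>i. P (i + 1)", OF per(1) this, of 1] show ?thesis
      using P2 by (simp add: add.assoc)
  qed
  finally show "(\<Prod>i\<in>?A. corner_x (pentagram v) i) = (\<Prod>i\<in>{i\<in>{1..int n}. P (i + 1)}. corner_x v i)" .
  have "(\<Prod>i\<in>?A. corner_y (pentagram v) i) = (\<Prod>i\<in>?A. corner_y v (i + 2))"
  proof (rule prod_cancel_ratio)
    show "corner_y (pentagram v) i = corner_y v (i + 2) * pentagram_gauge v (i + 3) / pentagram_gauge v (i + 1)" for i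
      by (rule corner_pentagram_gauge(2)[OF gv gw])
    show "(\<Prod>i\<in>?A. pentagram_gauge v (i + 3)) = (\<Prod>i\<in>?A. pentagram_gauge v (i + 1))"
      using gauge_shift[of 1] by (simp add: add.assoc)
    show "(\<Prod>i\<in>?A. pentagram_gauge v (i + 1)) \<noteq> 0" by (rule nz)
  qed
  also have "\<dots> = (\<Prod>i\<in>?A. corner_y v i)"
    using prod_filter_periodic_shift[of "corner_y v" n P, OF per(2) Pn, of 2] P2 by simp
  finally show "(\<Prod>i\<in>?A. corner_y (pentagram v) i) = (\<Prod>i\<in>?A. corner_y v i)" .
qed

theorem corollary2:
  fixes n :: nat and v :: "int \<Rightarrow> real^3"
  assumes "n \<ge> 5"
    and "generic_twisted_ngon n v"
    and "generic_twisted_ngon n (pentagram v)"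
  shows "(\<Prod>i\<in>{1..int n}. corner_x (pentagram v) i) = (\<Prod>i\<in>{1..int n}. corner_x v i)
    \<and> (\<Prod>i\<in>{1..int n}. corner_y (pentagram v) i) = (\<Prod>i\<in>{1..int n}. corner_y v i)
    \<and> (even n \<longrightarrow>
           (\<Prod>i\<in>{i\<in>{1..int n}. even i}. corner_x (pentagram v) i)
             + (\<Prod>i\<in>{i\<in>{1..int n}. odd i}. corner_x (pentagram v) i)
           = (\<Prod>i\<in>{i\<in>{1..int n}. even i}. corner_x v i)
             + (\<Prod>i\<in>{i\<in>{1..int n}. odd i}. corner_x v i))
    \<and> (even n \<longrightarrow>
           (\<Prod>i\<in>{i\<in>{1..int n}. even i}. corner_y (pentagram v) i)
             + (\<Prod>i\<in>{i\<in>{1..int n}. odd i}. corner_y (pentagram v) i)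
           = (\<Prod>i\<in>{i\<in>{1..int n}. even i}. corner_y v i)
             + (\<Prod>i\<in>{i\<in>{1..int n}. odd i}. corner_y v i))"
proof -
  note X = prod_corner_pentagram(1)[OF assms(2,3)]
    and Y = prod_corner_pentagram(2)[OF assms(2,3)]
  have "(\<Prod>i\<in>{1..int n}. corner_x (pentagram v) i) = (\<Prod>i\<in>{1..int n}. corner_x v i)"
    "(\<Prod>i\<in>{1..int n}. corner_y (pentagram v) i) = (\<Prod>i\<in>{1..int n}. corner_y v i)"
    using X[of "\<lambda>_. True"] Y[of "\<lambda>_. True"] by (simp_all only: simp_thms Collect_mem_eq)
  moreover have "(\<Prod>i\<in>{i\<in>{1..int n}. even i}. corner_x (pentagram v) i)
      = (\<Prod>i\<in>{i\<in>{1..int n}. odd i}. corner_x v i)"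
    "(\<Prod>i\<in>{i\<in>{1..int n}. odd i}. corner_x (pentagram v) i)
      = (\<Prod>i\<in>{i\<in>{1..int n}. even i}. corner_x v i)"
    "(\<Prod>i\<in>{i\<in>{1..int n}. even i}. corner_y (pentagram v) i)
      = (\<Prod>i\<in>{i\<in>{1..int n}. even i}. corner_y v i)"
    "(\<Prod>i\<in>{i\<in>{1..int n}. odd i}. corner_y (pentagram v) i)
      = (\<Prod>i\<in>{i\<in>{1..int n}. odd i}. corner_y v i)"
    if "even n"
    using that X[of even] X[of odd] Y[of even] Y[of odd] by simp_all
  ultimately show ?thesis by simp
qed

end
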